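(* Let $\Pi = (\mathcal{A}, \mathcal{E}, \mathcal{R})$ be an epistemic logic program, $\Phi \subseteq \mathcal{E}$ a guess, and suppose $\mathcal{Y} = \mathcal{SE}_\Pi(\Phi)$ is non-empty. Then there is a set $\mathcal{C} \subseteq \{ Y \mid (X, Y) \in \mathcal{Y} \}$ of size polynomial in the size of $\Pi$ that is $\Phi$-compatible w.r.t. $\mathcal{E}$.
   Context: A literal over a set of atoms $\mathcal{A}$ is an atom $a$ or $\neg a$. An interpretation is $I\subseteq\mathcal{A}$; $I\models a$ iff $a\in I$, $I\models\neg\ell$ iff $I\not\models\ell$. A (plain) logic program $(\mathcal{A},\mathcal{R})$ has rules $a_1\vee\cdots\vee a_l \leftarrow a_{l+1},\ldots,a_m,\neg\ell_1,\ldots,\neg\ell_n$ ($\ell_i$ literals); $H(r)$ head, $B(r)$ body, $B^+(r)=\{a_{l+1},\ldots,a_m\}$; $M\models r$ iff $M\models B(r)$ implies $M\cap H(r)\neq\emptyset$; $\mathrm{Mods}(\Pi)$ is the set of models. GL-reduct: $\Pi^I=(\mathcal{A},\{H(r)\leftarrow B^+(r)\mid r\in\mathcal{R},\ I\models\neg\ell\ \forall\neg\ell\in B(r)\})$ ($\neg\neg\neg a$ treated as $\neg a$). An SE-model of $\Pi$ is $(X,Y)$ with $X\subseteq Y\subseteq\mathcal{A}$, $Y\models\Pi$, $X\models\Pi^Y$; $\mathrm{SE}(\Pi)$ the set of SE-models. An ELP is $(\mathcal{A},\mathcal{E},\mathcal{R})$ with $\mathcal{E}$ a set of epistemic literals $\mathbf{not}\,\ell$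 and rules $a_1\vee\cdots\vee a_k\leftarrow \ell_1,\ldots,\ell_m,\xi_1,\ldots,\xi_j,\neg\xi_{j+1},\ldots,\neg\xi_n$, $\xi_i\in\mathcal{E}$. A guess is $\Phi\subseteq\mathcal{E}$; $\mathcal{I}$ is $\Phi$-compatible w.r.t. $\mathcal{E}$ iff $\mathcal{I}\neq\emptyset$, every $\mathbf{not}\,\ell\in\Phi$ has some $I\in\mathcal{I}$ with $I\not\models\ell$, and every $\mathbf{not}\,\ell\in\mathcal{E}\setminus\Phi$ has $I\models\ell$ for all $I\in\mathcal{I}$. The epistemic reduct $\Pi^\Phi=(\mathcal{A},\mathcal{R}^\Phi)$ replaces each $\mathbf{not}\,\ell\in\Phi$ by $\top$ and every other $\mathbf{not}$ by $\neg$. $\Phi$ is realizable in $\Pi$ iff some subset of $\mathrm{Mods}(\Pi^\Phi)$ is $\Phi$-compatible w.r.t. $\mathcal{E}$. SE-function: $\mathcal{SE}_\Pi(\Phi)=\mathrm{SE}(\Pi^\Phi)$ if $\Phi$ is realizable in $\Pi$, else $\emptyset$. *)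

theory Defs
  imports Main
begin

datatype 'a lit = Pos 'a | Neg 'a

fun lit_sat :: "'a set \<Rightarrow> 'a lit \<Rightarrow> bool" where
  "lit_sat I (Pos a) = (a \<in> I)"
| "lit_sat I (Neg a) = (a \<notin> I)"

fun lit_atom :: "'a lit \<Rightarrow> 'a" where
  "lit_atom (Pos a) = a" | "lit_atom (Neg a) = a"

(* the literal equivalent to \<not>\<ell> (with \<not>\<not>a read as a literal \<not>\<not>a is NOT produced;
   this is only used for \<not>\<not>\<not>a = \<not>a, see epistemic reduct) *)
fun lit_neg :: "'a lit \<Rightarrow> 'a lit" where
  "lit_neg (Pos a) = Neg a" | "lit_neg (Neg a) = Pos a"

(* rule  H \<leftarrow> B+, \<not>\<ell>1,...,\<not>\<ell>n : bneg stores the literals \<ell>i *)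
record 'a prule =
  phead :: "'a set"
  bpos  :: "'a set"
  bneg  :: "'a lit set"

definition body_sat :: "'a set \<Rightarrow> 'a prule \<Rightarrow> bool" where
  "body_sat M r \<longleftrightarrow> bpos r \<subseteq> M \<and> (\<forall>l\<in>bneg r. \<not> lit_sat M l)"

definition rule_sat :: "'a set \<Rightarrow> 'a prule \<Rightarrow> bool" where
  "rule_sat M r \<longleftrightarrow> (body_sat M r \<longrightarrow> M \<inter> phead r \<noteq> {})"

definition is_model :: "'a set \<Rightarrow> 'a prule set \<Rightarrow> 'a set \<Rightarrow> bool" where
  "is_model A R M \<longleftrightarrow> M \<subseteq> A \<and> (\<forall>r\<in>R. rule_sat M r)"

definition Mods :: "'a set \<Rightarrow> 'a prule set \<Rightarrow> 'a set set" where
  "Mods A R = {M. is_model A R M}"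

definition gl_reduct :: "'a prule set \<Rightarrow> 'a set \<Rightarrow> 'a prule set" where
  "gl_reduct R I = {\<lparr>phead = phead r, bpos = bpos r, bneg = {}\<rparr> | r.
                      r \<in> R \<and> (\<forall>l\<in>bneg r. \<not> lit_sat I l)}"

definition SE :: "'a set \<Rightarrow> 'a prule set \<Rightarrow> ('a set \<times> 'a set) set" where
  "SE A R = {(X, Y). X \<subseteq> Y \<and> Y \<subseteq> A \<and> is_model A R Y \<and> is_model A (gl_reduct R Y) X}"

(* epistemic literals  not \<ell>  are represented by \<ell>.
   rule  H \<leftarrow> \<ell>1..\<ell>m, \<xi>1..\<xi>j, \<not>\<xi>(j+1)..\<not>\<xi>n *)
record 'a erule =
  ehead :: "'a set"
  elits :: "'a lit set"
  epos  :: "'a lit set"    (* \<xi> = not \<ell> occurring positively, stored as \<ell> *)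
  eneg  :: "'a lit set"    (* \<xi> = not \<ell> occurring under \<not>, stored as \<ell> *)

definition wf_elp :: "'a set \<Rightarrow> 'a lit set \<Rightarrow> 'a erule set \<Rightarrow> bool" where
  "wf_elp A E R \<longleftrightarrow> finite A \<and> finite E \<and> finite R \<and> lit_atom ` E \<subseteq> A \<and>
     (\<forall>r\<in>R. ehead r \<subseteq> A \<and> lit_atom ` elits r \<subseteq> A \<and> epos r \<subseteq> E \<and> eneg r \<subseteq> E)"

definition compatible :: "'a lit set \<Rightarrow> 'a lit set \<Rightarrow> 'a set set \<Rightarrow> bool" where
  "compatible E \<Phi> C \<longleftrightarrow> C \<noteq> {} \<and>
     (\<forall>l\<in>\<Phi>. \<exists>I\<in>C. \<not> lit_sat I l) \<and>
     (\<forall>l\<in>E - \<Phi>. \<forall>I\<in>C. lit_sat I l)"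

(* Epistemic reduct: not \<ell> \<in> \<Phi> becomes \<top>, other not \<ell> becomes \<not>\<ell>.
   So \<xi> \<in> \<Phi> is dropped, \<not>\<xi> with \<xi> \<in> \<Phi> is \<not>\<top> = \<bottom> (the rule is dropped),
   \<xi> = not \<ell> \<notin> \<Phi> gives \<not>\<ell>, and \<not>\<xi> gives \<not>\<not>\<ell>, i.e. \<not>(lit_neg \<ell>) (using \<not>\<not>\<not>a = \<not>a).
   A body literal a is positive; a body literal \<not>a is \<not>\<ell> with \<ell> = a. *)
definition ereduct_rule :: "'a lit set \<Rightarrow> 'a erule \<Rightarrow> 'a prule" where
  "ereduct_rule \<Phi> r = \<lparr>phead = ehead r,
      bpos = {a. Pos a \<in> elits r},
      bneg = {Pos a | a. Neg a \<in> elits r} \<union> (epos r - \<Phi>) \<union> lit_neg ` (eneg r - \<Phi>)\<rparr>"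

definition ereduct :: "'a lit set \<Rightarrow> 'a erule set \<Rightarrow> 'a prule set" where
  "ereduct \<Phi> R = {ereduct_rule \<Phi> r | r. r \<in> R \<and> eneg r \<inter> \<Phi> = {}}"

definition realizable :: "'a set \<Rightarrow> 'a lit set \<Rightarrow> 'a erule set \<Rightarrow> 'a lit set \<Rightarrow> bool" where
  "realizable A E R \<Phi> \<longleftrightarrow> (\<exists>C\<subseteq>Mods A (ereduct \<Phi> R). compatible E \<Phi> C)"

definition SE_fun :: "'a set \<Rightarrow> 'a lit set \<Rightarrow> 'a erule set \<Rightarrow> 'a lit set \<Rightarrow> ('a set \<times> 'a set) set" where
  "SE_fun A E R \<Phi> = (if realizable A E R \<Phi> then SE A (ereduct \<Phi> R) else {})"

end

theory Submission
  imports Defs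
begin

text \<open>A compatible family only needs one witness per guessed epistemic literal (plus one
  interpretation to be non-empty), and every model Y of the reduct yields the SE-model (Y, Y).\<close>

lemma model_imp_SE_diag:
  assumes "is_model A R Y"
  shows "(Y, Y) \<in> SE A R"
proof -
  have "is_model A (gl_reduct R Y) Y"
    using assms unfolding is_model_def gl_reduct_def rule_sat_def body_sat_def by auto
  then show ?thesis
    using assms by (auto simp: SE_def is_model_def)
qed

lemma Mods_subset_snd_SE: "Mods A R \<subseteq> snd ` SE A R"
proof
  fix Y assume "Y \<in> Mods A R"
  then have "(Y, Y) \<in> SE A R"
    by (simp add: Mods_def model_imp_SE_diag)
  then show "Y \<in> snd ` SE A R"
    by force
qed

lemma compatible_small_subset:
  assumes "compatible E \<Phi> C" and "finite \<Phi>"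
  obtains C' where "C' \<subseteq> C" "finite C'" "card C' \<le> card \<Phi> + 1" "compatible E \<Phi> C'"
proof -
  obtain I0 where I0: "I0 \<in> C"
    using assms(1) by (auto simp: compatible_def)
  obtain w where w: "\<And>l. l \<in> \<Phi> \<Longrightarrow> w l \<in> C \<and> \<not> lit_sat (w l) l"
    using assms(1) unfolding compatible_def by metis
  define C' where "C' = insert I0 (w ` \<Phi>)"
  have "C' \<subseteq> C"
    using I0 w by (auto simp: C'_def)
  moreover have "finite C'"
    using assms(2) by (simp add: C'_def)
  moreover have "card C' \<le> card \<Phi> + 1"
  proof -
    have "card C' \<le> card (w ` \<Phi>) + 1"
      using assms(2) by (simp add: C'_def card_insert_if)
    also have "\<dots> \<le> card \<Phi> + 1"
      using card_image_le assms(2) by simp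
    finally show ?thesis .
  qed
  moreover have "compatible E \<Phi> C'"
    using assms(1) \<open>C' \<subseteq> C\<close> w unfolding compatible_def C'_def by blast
  ultimately show ?thesis
    using that by blast
qed

theorem lemma3:
  fixes A :: "'a set" and E :: "'a lit set" and R :: "'a erule set" and \<Phi> :: "'a lit set"
  assumes "wf_elp A E R"
    and "\<Phi> \<subseteq> E"
    and "SE_fun A E R \<Phi> \<noteq> {}"
  shows "\<exists>C. C \<subseteq> snd ` SE_fun A E R \<Phi> \<and> finite C \<and> card C \<le> card E + 1
             \<and> compatible E \<Phi> C"
proof -
  have realizable: "realizable A E R \<Phi>"
    using assms(3) by (auto simp: SE_fun_def split: if_splits)
  then obtain C0 where C0: "C0 \<subseteq> Mods A (ereduct \<Phi> R)" "compatible E \<Phi> C0"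
    by (auto simp: realizable_def)
  have "finite E"
    using assms(1) by (simp add: wf_elp_def)
  then have "finite \<Phi>" "card \<Phi> \<le> card E"
    using assms(2) by (auto intro: finite_subset card_mono)
  obtain C where C: "C \<subseteq> C0" "finite C" "card C \<le> card \<Phi> + 1" "compatible E \<Phi> C"
    using compatible_small_subset[OF C0(2) \<open>finite \<Phi>\<close>] by blast
  have "C \<subseteq> snd ` SE_fun A E R \<Phi>"
    using C(1) C0(1) Mods_subset_snd_SE[of A "ereduct \<Phi> R"] realizable
    by (simp add: SE_fun_def)
  then show ?thesis
    using C \<open>card \<Phi> \<le> card E\<close> by auto
qed

end
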